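(* Let $a,b,c$ be non-constant polynomials in $\mathbb{F}_2[t]$ and let $\boldsymbol{\varepsilon}=(a,b,c)^\infty$, i.e. $\varepsilon_{3m}=a$, $\varepsilon_{3m+1}=b$, $\varepsilon_{3m+2}=c$ for $m\geq 0$. Let $\beta=1/CF(\mathbf{s}(\boldsymbol{\varepsilon}))$. Then $$\beta^8=A+B_0\beta+B_1\beta^2+B_2\beta^4,$$ where $A,B_0,B_1,B_2\in\mathbb{F}_2[t]$ are $$A=a^3b^2c + a^2b^2c^2 + ab^3c^2 + b^4c^2 + ab^2c^3 + abc^4 + a^2bc + ab^2c + abc^2 + c^4 + 1,$$ $$B_0= a^4b^2c + a^3b^2c^2 + a^2b^3c^2 + ab^4c^2 + a^2b^2c^3 + a^2bc^4,$$ $$B_1=a^3b^2c + a^2b^2c^2 + ab^3c^2 + a^2bc^3,$$ $$B_2=a^2bc + ab^2c + abc^2.$$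
   Context: Given a sequence $\boldsymbol{\varepsilon}=(\varepsilon_n)_{n\geq 0}$, define words $W_0=$ empty word and $W_{n+1}=W_n\,\varepsilon_n\,W_n$ (concatenation) for $n\geq 0$; $\mathbf{s}(\boldsymbol{\varepsilon})=(s_i)_{i\geq 0}$ is the infinite word beginning with every $W_n$, i.e. $\varepsilon_0\varepsilon_1\varepsilon_0\varepsilon_2\varepsilon_0\varepsilon_1\varepsilon_0\varepsilon_3\cdots$. $CF(\mathbf{s}(\boldsymbol{\varepsilon}))=[s_0,s_1,\dots]=s_0+1/(s_1+1/(s_2+\cdots))$ is the infinite continued fraction in $\mathbb{F}_2((1/t))$ with these partial quotients. *)

theory Defs
  imports "HOL-Computational_Algebra.Computational_Algebra" "HOL-Library.Z2"
begin

(* F_2 is the type bit; F_2[t] is bit poly; F_2((1/t)) is bit fls, the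
   Laurent series in the variable X = 1/t (with the X-adic metric topology
   from the library, i.e. the usual 1/t-adic topology). *)

definition tpoly_to_fls :: "bit poly \<Rightarrow> bit fls" where
  "tpoly_to_fls p = (\<Sum>i\<le>degree p. fls_const (coeff p i) * fls_X_inv ^ i)"

fun W :: "(nat \<Rightarrow> 'a) \<Rightarrow> nat \<Rightarrow> 'a list" where
  "W eps 0 = []"
| "W eps (Suc n) = W eps n @ [eps n] @ W eps n"

(* the infinite word beginning with every W_n; W_{i+1} has length 2^(i+1)-1 > i *)
definition sword :: "(nat \<Rightarrow> 'a) \<Rightarrow> nat \<Rightarrow> 'a" where
  "sword eps i = W eps (Suc i) ! i"

fun cf_fin :: "'a::field list \<Rightarrow> 'a" where
  "cf_fin [] = 0"
| "cf_fin [x] = x"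
| "cf_fin (x # xs) = x + 1 / cf_fin xs"

definition convergents :: "(nat \<Rightarrow> 'a::field) \<Rightarrow> nat \<Rightarrow> 'a" where
  "convergents s n = cf_fin (map s [0..<Suc n])"

definition CF :: "(nat \<Rightarrow> bit fls) \<Rightarrow> bit fls" where
  "CF s = lim (convergents s)"

end

theory Submission
  imports Defs
begin

text \<open>Write \<open>P\<^sub>N, Q\<^sub>N\<close> for the first row of the (symmetric) continuant matrix of the
  palindrome \<open>W\<^sub>N\<close>. Folding \<open>W\<^sub>N\<^sub>+\<^sub>1 = W\<^sub>N \<epsilon>\<^sub>N W\<^sub>N\<close> gives
  \<open>P\<^sub>N\<^sub>+\<^sub>1 = \<epsilon>\<^sub>N P\<^sub>N\<^sup>2\<close> and \<open>Q\<^sub>N\<^sub>+\<^sub>1 = \<epsilon>\<^sub>N P\<^sub>N Q\<^sub>N + 1\<close> in characteristic 2,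
  and \<open>Q\<^sub>N/P\<^sub>N\<close> is the reciprocal of a convergent, so it approximates \<open>\<beta>\<close> to \<open>1/t\<close>-adic
  order at least \<open>N - 1\<close>.
  In characteristic 2 the map \<open>F x = x\<^sup>8 + B\<^sub>2 x\<^sup>4 + B\<^sub>1 x\<^sup>2 + B\<^sub>0 x\<close> is additive, and
  \<open>Q\<^sub>N\<^sub>+\<^sub>1/P\<^sub>N\<^sub>+\<^sub>1 - Q\<^sub>N/P\<^sub>N = 1/P\<^sub>N\<^sub>+\<^sub>1\<close>. For the 3-periodic sequence this makes the
  residual \<open>F (Q\<^sub>N/P\<^sub>N) + A\<close> equal to \<open>B\<^sub>0/P\<^sub>N\<^sub>+\<^sub>1 + c\<^sub>N/P\<^sub>N\<^sub>+\<^sub>2 + d\<^sub>N/P\<^sub>N\<^sub>+\<^sub>3\<close>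
  with \<open>c\<^sub>N, d\<^sub>N\<close> taking only three values each, so its order grows like \<open>N\<close>.
  By additivity \<open>F \<beta> + A\<close> then has arbitrarily large order, i.e. it vanishes.\<close>

unbundle fps_syntax

section \<open>Characteristic two\<close>

lemma CHAR_bit [simp]: "CHAR(bit) = 2"
proof (rule CHAR_eqI)
  show "of_nat 2 = (0::bit)" by simp
next
  fix n :: nat
  have "of_nat n = (0::bit) \<longleftrightarrow> even n" by (induction n) auto
  then show "of_nat n = (0::bit) \<Longrightarrow> 2 dvd n" by simp
qed

lemma two_eq_zero_CHAR_2: "CHAR('a) = 2 \<Longrightarrow> (2::'a::comm_ring_1) = 0"
  by (metis of_nat_CHAR of_nat_numeral)

lemma add_self_CHAR_2: "CHAR('a) = 2 \<Longrightarrow> x + x = (0::'a::comm_ring_1)"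
  by (metis mult_2 two_eq_zero_CHAR_2 mult_zero_left)

lemma eq_if_add_eq_double_CHAR_2:
  "CHAR('a) = 2 \<Longrightarrow> x + y = 2 * (z::'a::comm_ring_1) \<Longrightarrow> x = y"
  by (metis add_right_cancel add_self_CHAR_2 mult_zero_left two_eq_zero_CHAR_2)

lemma eq_if_add_eq_0_CHAR_2: "CHAR('a) = 2 \<Longrightarrow> x + y = (0::'a::comm_ring_1) \<Longrightarrow> x = y"
  by (metis add_right_cancel add_self_CHAR_2)

lemma power2_add_CHAR_2: "CHAR('a) = 2 \<Longrightarrow> (x + y) ^ 2 = x ^ 2 + (y ^ 2 :: 'a::comm_ring_1)"
  by (simp add: power2_sum two_eq_zero_CHAR_2)

lemma power_two_power_add_CHAR_2:
  "CHAR('a) = 2 \<Longrightarrow> (x + y) ^ 2 ^ k = x ^ 2 ^ k + (y ^ 2 ^ k :: 'a::comm_ring_1)"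
proof (induction k)
  case (Suc k)
  have "(x + y) ^ 2 ^ Suc k = ((x + y) ^ 2 ^ k) ^ 2"
    by (simp only: power_Suc2 power_mult)
  also have "\<dots> = (x ^ 2 ^ k) ^ 2 + (y ^ 2 ^ k) ^ 2"
    using Suc by (simp add: power2_add_CHAR_2)
  finally show ?case
    by (simp only: power_Suc2 power_mult)
qed simp

section \<open>Polynomials in \<open>t\<close> as Laurent series in \<open>1/t\<close>\<close>

lemma tpoly_to_fls_nth:
  "tpoly_to_fls p $$ k = (if k \<le> 0 then coeff p (nat (-k)) else 0)"
proof -
  have sum: "tpoly_to_fls p $$ k = (\<Sum>i\<le>degree p. if k = - int i then coeff p i else 0)"
    unfolding tpoly_to_fls_def fls_nth_sum by (intro sum.cong) auto
  show ?thesis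
  proof (cases "k \<le> 0")
    case True
    have "(\<Sum>i\<le>degree p. if k = - int i then coeff p i else 0)
        = (\<Sum>i\<le>degree p. if i = nat (-k) then coeff p i else 0)"
      by (rule sum.cong) (use True in auto)
    also have "\<dots> = coeff p (nat (-k))"
      by (auto simp: coeff_eq_0)
    finally show ?thesis using sum True by simp
  qed (use sum in \<open>auto intro!: sum.neutral\<close>)
qed

lemma tpoly_to_fls_0 [simp]: "tpoly_to_fls 0 = 0"
  by (rule fls_eqI) (simp add: tpoly_to_fls_nth)

lemma tpoly_to_fls_1 [simp]: "tpoly_to_fls 1 = 1"
  by (rule fls_eqI) (auto simp: tpoly_to_fls_nth coeff_1)

lemma tpoly_to_fls_add [simp]: "tpoly_to_fls (p + q) = tpoly_to_fls p + tpoly_to_fls q"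
  by (rule fls_eqI) (simp add: tpoly_to_fls_nth)

lemma tpoly_to_fls_smult: "tpoly_to_fls (smult c p) = fls_const c * tpoly_to_fls p"
  by (rule fls_eqI) (simp add: tpoly_to_fls_nth)

lemma tpoly_to_fls_pCons:
  "tpoly_to_fls (pCons c p) = fls_const c + fls_X_inv * tpoly_to_fls p"
proof (rule fls_eqI)
  fix k
  show "tpoly_to_fls (pCons c p) $$ k = (fls_const c + fls_X_inv * tpoly_to_fls p) $$ k"
  proof (cases "k < 0")
    case True
    then have "nat (-k) = Suc (nat (-k - 1))" by simp
    with True show ?thesis by (simp add: tpoly_to_fls_nth fls_X_inv_times_conv_shift)
  qed (auto simp: tpoly_to_fls_nth fls_X_inv_times_conv_shift)
qed

lemma tpoly_to_fls_mult [simp]: "tpoly_to_fls (p * q) = tpoly_to_fls p * tpoly_to_fls q"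
proof (induction p)
  case (pCons c p)
  have "tpoly_to_fls (pCons c p * q) = tpoly_to_fls (smult c q + pCons 0 (p * q))"
    by simp
  also have "\<dots> = fls_const c * tpoly_to_fls q + fls_X_inv * (tpoly_to_fls p * tpoly_to_fls q)"
    by (simp only: tpoly_to_fls_add tpoly_to_fls_smult tpoly_to_fls_pCons pCons.IH) simp
  also have "\<dots> = tpoly_to_fls (pCons c p) * tpoly_to_fls q"
    by (simp add: tpoly_to_fls_pCons algebra_simps)
  finally show ?case .
qed simp

lemma tpoly_to_fls_power [simp]: "tpoly_to_fls (p ^ n) = tpoly_to_fls p ^ n"
  by (induction n) simp_all

lemma tpoly_to_fls_eq_0_iff [simp]: "tpoly_to_fls p = 0 \<longleftrightarrow> p = 0"
proof
  assume "tpoly_to_fls p = 0"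
  then have "tpoly_to_fls p $$ (- int n) = 0" for n
    by simp
  then have "coeff p n = 0" for n
    by (simp add: tpoly_to_fls_nth)
  then show "p = 0" by (simp add: poly_eqI)
qed simp

lemma fls_subdegree_tpoly_to_fls:
  "p \<noteq> 0 \<Longrightarrow> fls_subdegree (tpoly_to_fls p) = - int (degree p)"
  by (rule fls_subdegree_eqI) (auto simp: tpoly_to_fls_nth coeff_eq_0)

section \<open>Lower bounds on the order of a Laurent series\<close>

text \<open>Stated coefficientwise, so that \<open>0\<close> vanishes below every bound (unlike a bound on
  \<open>fls_subdegree\<close>, which is \<open>0\<close> at \<open>0\<close>).\<close>

definition fls_vanishes_below :: "'a::zero fls \<Rightarrow> int \<Rightarrow> bool" where
  "fls_vanishes_below x k \<longleftrightarrow> (\<forall>j<k. x $$ j = 0)"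

lemma fls_vanishes_below_0 [simp]: "fls_vanishes_below 0 k"
  by (simp add: fls_vanishes_below_def)

lemma fls_vanishes_below_subdegree: "fls_vanishes_below x (fls_subdegree x)"
  by (simp add: fls_vanishes_below_def)

lemma fls_vanishes_below_iff:
  "x \<noteq> 0 \<Longrightarrow> fls_vanishes_below x k \<longleftrightarrow> k \<le> fls_subdegree x"
  unfolding fls_vanishes_below_def
  using nth_fls_subdegree_nonzero[of x] fls_subdegree_geI[of x k] by force

lemma fls_vanishes_below_mono:
  "fls_vanishes_below x k \<Longrightarrow> k' \<le> k \<Longrightarrow> fls_vanishes_below x k'"
  by (simp add: fls_vanishes_below_def)

lemma fls_vanishes_below_add:
  "fls_vanishes_below x k \<Longrightarrow> fls_vanishes_below y k \<Longrightarrow> fls_vanishes_below (x + y) k"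
  by (simp add: fls_vanishes_below_def)

lemma fls_vanishes_below_minus_commute:
  fixes x y :: "'a::group_add fls"
  shows "fls_vanishes_below (x - y) k \<longleftrightarrow> fls_vanishes_below (y - x) k"
  by (simp add: fls_vanishes_below_def eq_commute[of "x $$ _"])

lemma fls_vanishes_below_mult:
  fixes x y :: "'a::semiring_0 fls"
  assumes "fls_vanishes_below x k" "fls_vanishes_below y l"
  shows "fls_vanishes_below (x * y) (k + l)"
proof (cases "x = 0 \<or> y = 0")
  case False
  then have "k + l \<le> fls_subdegree x + fls_subdegree y"
    using assms by (simp add: fls_vanishes_below_iff add_mono)
  then show ?thesis
    by (simp add: fls_vanishes_below_def fls_times_nth_eq0)
qed auto

lemma fls_vanishes_below_power:
  fixes x :: "'a::semiring_1 fls"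
  shows "fls_vanishes_below x k \<Longrightarrow> fls_vanishes_below (x ^ n) (int n * k)"
proof (induction n)
  case 0
  then show ?case by (simp add: fls_vanishes_below_def)
next
  case (Suc n)
  then have "fls_vanishes_below (x * x ^ n) (k + int n * k)"
    by (intro fls_vanishes_below_mult)
  then show ?case by (simp add: algebra_simps)
qed

lemma fls_eq_0_if_vanishes_below:
  assumes "\<And>k. fls_vanishes_below x k"
  shows "x = 0"
proof (rule fls_eqI)
  fix n
  have "fls_vanishes_below x (n + 1)" by (rule assms)
  then show "x $$ n = 0 $$ n" by (simp add: fls_vanishes_below_def)
qed

lemma fls_vanishes_below_tpoly_to_fls: "fls_vanishes_below (tpoly_to_fls p) (- int (degree p))"
  by (cases "p = 0") (auto simp: fls_vanishes_below_iff fls_subdegree_tpoly_to_fls)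

lemma fls_vanishes_below_telescope:
  fixes f :: "nat \<Rightarrow> 'a::group_add fls"
  assumes diff: "\<And>n. fls_vanishes_below (f (Suc n) - f n) (int n)"
  shows "n \<le> m \<Longrightarrow> fls_vanishes_below (f m - f n) (int n)"
proof (induction m rule: dec_induct)
  case (step m)
  have "fls_vanishes_below (f (Suc m) - f m) (int n)"
    using diff[of m] by (rule fls_vanishes_below_mono) (use step(1) in simp)
  then have "fls_vanishes_below ((f (Suc m) - f m) + (f m - f n)) (int n)"
    using step(3) by (rule fls_vanishes_below_add)
  then show ?case by (simp add: algebra_simps)
qed simp

lemma dist_fls_le_if_vanishes_below:
  fixes x y :: "'a::group_add fls"
  assumes "fls_vanishes_below (x - y) (int n)"
  shows "dist x y \<le> (1/2) ^ n"
proof (cases "x = y")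
  case False
  then have n: "int n \<le> fls_subdegree (x - y)"
    using assms by (simp add: fls_vanishes_below_iff)
  then have "dist x y = inverse (2 ^ nat (fls_subdegree (x - y)))"
    using False by (simp add: dist_fls_def)
  also have "\<dots> \<le> inverse (2 ^ n)"
    using n by (intro le_imp_inverse_le power_increasing) auto
  finally show ?thesis by (simp add: power_one_over inverse_eq_divide)
qed simp

lemma fls_convergent_if_differences_vanish_below:
  fixes f :: "nat \<Rightarrow> 'a::group_add fls"
  assumes step: "\<And>n. fls_vanishes_below (f (Suc n) - f n) (int n)"
  obtains L where "f \<longlonglongrightarrow> L" and "\<And>n. fls_vanishes_below (L - f n) (int n)"
proof -
  have agree: "f m $$ j = f n $$ j" if "j < int n" "j < int m" for m n j
  proof -
    have "f m $$ j = f n $$ j" if "n \<le> m" "j < int n" for m n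
    proof -
      have "(f m - f n) $$ j = 0"
        using fls_vanishes_below_telescope[OF step that(1)] that(2)
        by (simp add: fls_vanishes_below_def)
      then show ?thesis by simp
    qed
    then show ?thesis
      using that by (cases "n \<le> m") (simp_all, metis nat_le_linear)
  qed
  \<comment> \<open>the limit takes its \<open>j\<close>-th coefficient from any \<open>f n\<close> with \<open>j < n\<close>\<close>
  define g where "g j = f (nat j + 1) $$ j" for j
  obtain N where N: "\<forall>j<N. f 0 $$ j = 0" by (elim fls_nth_vanishes_belowE)
  have "g j = 0" if "j < min N 0" for j
    using that agree[of j 0 "nat j + 1"] N by (simp add: g_def)
  then have nth_L: "Abs_fls g $$ j = g j" for j
    by (intro nth_Abs_fls_lower_bound) blast
  define L where "L = Abs_fls g"
  have L: "fls_vanishes_below (L - f n) (int n)" for n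
    unfolding fls_vanishes_below_def L_def
    using agree[of _ n "nat _ + 1"] by (auto simp: nth_L g_def)
  have "f \<longlonglongrightarrow> L"
  proof (rule metric_LIMSEQ_I)
    fix r :: real
    assume "0 < r"
    then obtain n0 where n0: "(1/2::real) ^ n0 < r"
      using real_arch_pow_inv[of r "1/2"] by auto
    have "dist (f n) L < r" if "n \<ge> n0" for n
    proof -
      have "dist (f n) L \<le> (1/2) ^ n"
        using L
        by (intro dist_fls_le_if_vanishes_below) (simp add: fls_vanishes_below_minus_commute)
      also have "\<dots> \<le> (1/2) ^ n0"
        using that by (intro power_decreasing) auto
      finally show ?thesis using n0 by simp
    qed
    then show "\<exists>n0. \<forall>n\<ge>n0. dist (f n) L < r" by blast
  qed
  then show thesis using L by (rule that)
qed

lemma fls_vanishes_below_inverse_diff: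
  fixes x z :: "'a::field fls"
  assumes close: "fls_vanishes_below (x - z) m" and "z \<noteq> 0" and "fls_subdegree z < m"
  shows "fls_vanishes_below (inverse x - inverse z) (m - 2 * fls_subdegree z)"
proof -
  have "fls_subdegree (z + (x - z)) = fls_subdegree z"
  proof (cases "x - z = 0")
    case False
    then show ?thesis
      using assms by (intro fls_subdegree_add_eq1) (auto simp: fls_vanishes_below_iff)
  qed simp
  moreover have "x \<noteq> 0"
  proof
    assume "x = 0"
    then have "m \<le> fls_subdegree (- z)"
      using close \<open>z \<noteq> 0\<close> by (simp add: fls_vanishes_below_iff)
    then show False
      using assms by simp
  qed
  ultimately have x: "fls_subdegree x = fls_subdegree z" "x \<noteq> 0"
    by auto
  have "inverse x - inverse z = (z - x) * inverse (x * z)"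
    using x \<open>z \<noteq> 0\<close> by (simp add: field_simps)
  moreover have "fls_vanishes_below (z - x) m"
    using close by (simp add: fls_vanishes_below_minus_commute)
  moreover have "fls_vanishes_below (inverse (x * z)) (- 2 * fls_subdegree z)"
    using fls_vanishes_below_subdegree[of "inverse (x * z)"] x \<open>z \<noteq> 0\<close> by simp
  ultimately show ?thesis
    using fls_vanishes_below_mult by fastforce
qed

section \<open>Continuants\<close>

type_synonym 'a mat2 = "'a \<times> 'a \<times> 'a \<times> 'a"

fun mat2_mult :: "'a::semiring_1 mat2 \<Rightarrow> 'a mat2 \<Rightarrow> 'a mat2" where
  "mat2_mult (a, b, c, d) (e, f, g, h) = (a*e + b*g, a*f + b*h, c*e + d*g, c*f + d*h)"

text \<open>With \<open>(a, b, c, d)\<close> standing for \<open>[[a, b], [c, d]]\<close>, this is the product of the matrices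
  \<open>[[x, 1], [1, 0]]\<close> over the partial quotients \<open>x\<close>; its first column holds the numerator and
  denominator of the finite continued fraction.\<close>

fun cf_matrix :: "'a::semiring_1 list \<Rightarrow> 'a mat2" where
  "cf_matrix [] = (1, 0, 0, 1)"
| "cf_matrix (x # xs) = mat2_mult (x, 1, 1, 0) (cf_matrix xs)"

lemma mat2_mult_assoc: "mat2_mult (mat2_mult A B) C = mat2_mult A (mat2_mult B C)"
  by (cases A, cases B, cases C) (simp add: algebra_simps)

lemma cf_matrix_append: "cf_matrix (xs @ ys) = mat2_mult (cf_matrix xs) (cf_matrix ys)"
proof (induction xs)
  case Nil
  then show ?case by (cases "cf_matrix ys") simp
qed (simp add: mat2_mult_assoc)

lemma cf_matrix_det:
  fixes xs :: "'a::comm_ring_1 list"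
  shows "cf_matrix xs = (p, p', q, q') \<Longrightarrow> p * q' - p' * q = (-1) ^ length xs"
proof (induction xs arbitrary: p p' q q')
  case (Cons x xs)
  obtain P P' Q Q' where m: "cf_matrix xs = (P, P', Q, Q')"
    by (cases "cf_matrix xs") auto
  have "p = x * P + Q" "p' = x * P' + Q'" "q = P" "q' = P'"
    using Cons.prems m by auto
  then have "p * q' - p' * q = - (P * Q' - P' * Q)"
    by (simp add: algebra_simps)
  then show ?case
    using Cons.IH[OF m] by simp
qed simp

lemma cf_matrix_det_CHAR_2:
  fixes xs :: "'a::comm_ring_1 list"
  assumes "CHAR('a) = 2" and "cf_matrix xs = (p, p', q, q')"
  shows "p * q' + p' * q = 1"
proof -
  have "(-1::'a) = 1"
    using uminus_CHAR_2[OF assms(1)] by blast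
  then have "(-1::'a) ^ length xs = 1"
    by (metis power_one)
  then show ?thesis
    using cf_matrix_det[OF assms(2)] by (simp only: minus_CHAR_2[OF assms(1)])
qed

lemma cf_matrix_degrees:
  fixes xs :: "'a::idom poly list"
  assumes "xs \<noteq> []" and "\<forall>x\<in>set xs. degree x > 0" and "cf_matrix xs = (p, p', q, q')"
  shows "q \<noteq> 0 \<and> length xs \<le> degree q + 1 \<and> degree q < degree p \<and> degree p' < degree p
    \<and> degree q' \<le> degree q"
  using assms
proof (induction xs arbitrary: p p' q q')
  case (Cons x xs)
  have x: "degree x > 0" using Cons.prems(2) by simp
  show ?case
  proof (cases "xs = []")
    case True
    then show ?thesis using Cons.prems x by auto
  next
    case False
    obtain P P' Q Q' where m: "cf_matrix xs = (P, P', Q, Q')"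
      by (cases "cf_matrix xs") auto
    have IH: "Q \<noteq> 0 \<and> length xs \<le> degree Q + 1 \<and> degree Q < degree P \<and> degree P' < degree P
        \<and> degree Q' \<le> degree Q"
      using Cons.IH[OF False _ m] Cons.prems(2) by simp
    have eqs: "p = x * P + Q" "p' = x * P' + Q'" "q = P" "q' = P'"
      using Cons.prems(3) m by auto
    have "P \<noteq> 0" "x \<noteq> 0" using IH x by auto
    then have dp: "degree p = degree x + degree P"
      using IH x unfolding eqs by (subst degree_add_eq_left) (auto simp: degree_mult_eq)
    have "degree (x * P') < degree p" "degree Q' < degree p"
      using dp IH x degree_mult_le[of x P'] by linarith+
    then have "degree p' < degree p"
      unfolding eqs using degree_add_le_max[of "x * P'" Q'] by linarith
    then show ?thesis using IH eqs dp x \<open>P \<noteq> 0\<close> by auto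
  qed
qed simp

lemma cf_fin_cf_matrix:
  assumes "xs \<noteq> []" and "\<forall>x\<in>set xs. degree x > 0" and "cf_matrix xs = (p, p', q, q')"
  shows "cf_fin (map tpoly_to_fls xs) = tpoly_to_fls p / tpoly_to_fls q"
  using assms
proof (induction xs arbitrary: p p' q q')
  case (Cons x xs)
  show ?case
  proof (cases "xs = []")
    case False
    obtain P P' Q Q' where m: "cf_matrix xs = (P, P', Q, Q')"
      by (cases "cf_matrix xs") auto
    have "P \<noteq> 0"
      using cf_matrix_degrees[OF False _ m] Cons.prems(2) by auto
    have "p = x * P + Q" "q = P"
      using Cons.prems(3) m by auto
    moreover have "cf_fin (map tpoly_to_fls (x # xs))
        = tpoly_to_fls x + 1 / cf_fin (map tpoly_to_fls xs)"
      using False by (cases xs) simp_all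
    ultimately show ?thesis
      using Cons.IH[OF False _ m] Cons.prems(2) \<open>P \<noteq> 0\<close> by (simp add: field_simps)
  qed (use Cons.prems in auto)
qed simp

section \<open>The convergents of \<open>CF(s(\<epsilon>))\<close>\<close>

lemma length_W: "length (W eps n) = 2 ^ n - 1"
proof (induction n)
  case (Suc n)
  have "(1::nat) \<le> 2 ^ n" by simp
  with Suc show ?case by simp
qed simp

lemma W_prefix: "n \<le> m \<Longrightarrow> \<exists>t. W eps m = W eps n @ t"
proof (induction m rule: dec_induct)
  case (step m)
  then obtain t where "W eps m = W eps n @ t" by blast
  then show ?case by simp
qed simp

lemma set_W: "set (W eps n) \<subseteq> range eps"
  by (induction n) auto

lemma less_length_W_Suc: "i < length (W eps (Suc i))"
proof -
  have "i < 2 ^ i" by (rule less_exp)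
  then show ?thesis unfolding length_W power_Suc by linarith
qed

lemma sword_eq_W_nth: "i < length (W eps n) \<Longrightarrow> sword eps i = W eps n ! i"
proof -
  assume i: "i < length (W eps n)"
  obtain t where t: "W eps (max n (Suc i)) = W eps n @ t"
    using W_prefix[of n "max n (Suc i)"] by auto
  obtain t' where t': "W eps (max n (Suc i)) = W eps (Suc i) @ t'"
    using W_prefix[of "Suc i" "max n (Suc i)"] by auto
  have "W eps n ! i = W eps (max n (Suc i)) ! i"
    using i by (simp only: t nth_append if_True)
  also have "\<dots> = W eps (Suc i) ! i"
    using less_length_W_Suc[of i eps] by (simp only: t' nth_append if_True)
  finally show ?thesis by (simp add: sword_def)
qed

lemma sword_in_range: "sword eps i \<in> range eps"
  unfolding sword_def using nth_mem[OF less_length_W_Suc] set_W by (rule subsetD[rotated])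

lemma map_sword_W: "map (sword eps) [0..<2 ^ n - 1] = W eps n"
  by (rule nth_equalityI) (simp_all add: length_W sword_eq_W_nth)

lemma degree_sword_pos: "(\<And>n. 0 < degree (eps n)) \<Longrightarrow> 0 < degree (sword eps i)"
  using sword_in_range[of eps i] by auto

lemma convergents_sword_cf_matrix:
  assumes pos: "\<And>n. 0 < degree (eps n)"
    and m: "cf_matrix (map (sword eps) [0..<Suc n]) = (p, p', q, q')"
  shows "convergents (\<lambda>i. tpoly_to_fls (sword eps i)) n = tpoly_to_fls p / tpoly_to_fls q"
  unfolding convergents_def
  using cf_fin_cf_matrix[OF _ _ m] degree_sword_pos[OF pos] by (simp add: comp_def)

lemma convergents_sword_diff:
  fixes eps :: "nat \<Rightarrow> bit poly"
  defines "c \<equiv> convergents (\<lambda>i. tpoly_to_fls (sword eps i))"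
  assumes pos: "\<And>n. 0 < degree (eps n)"
  shows "fls_vanishes_below (c (Suc n) - c n) (int n)"
proof -
  define xs where "xs = map (sword eps) [0..<Suc n]"
  define y where "y = sword eps (Suc n)"
  obtain p p' q q' where m: "cf_matrix xs = (p, p', q, q')"
    by (cases "cf_matrix xs") auto
  have m': "cf_matrix (xs @ [y]) = (p * y + p', p, q * y + q', q)"
    by (simp add: cf_matrix_append m)
  have xs': "map (sword eps) [0..<Suc (Suc n)] = xs @ [y]"
    by (simp add: xs_def y_def)
  have pos_xs: "\<forall>x\<in>set (xs @ [y]). 0 < degree x"
    using degree_sword_pos[OF pos] by (auto simp: xs_def y_def)
  have q: "q \<noteq> 0" "n \<le> degree q"
    using cf_matrix_degrees[OF _ _ m] pos_xs by (auto simp: xs_def)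
  have q': "q * y + q' \<noteq> 0"
    using cf_matrix_degrees[OF _ _ m'] pos_xs by auto
  have "(p * y + p') * q + p * (q * y + q') = (p * q' + p' * q) + 2 * (p * q * y)"
    by (simp add: algebra_simps)
  then have "(p * y + p') * q + p * (q * y + q') = 1"
    using cf_matrix_det_CHAR_2[OF _ m] two_eq_zero_CHAR_2[where 'a="bit poly"] by simp
  then have "tpoly_to_fls (p * y + p') * tpoly_to_fls q
      - tpoly_to_fls p * tpoly_to_fls (q * y + q') = 1"
    by (metis minus_CHAR_2 semiring_char_fls CHAR_bit
        tpoly_to_fls_1 tpoly_to_fls_add tpoly_to_fls_mult)
  moreover have "c n = tpoly_to_fls p / tpoly_to_fls q"
    unfolding c_def using convergents_sword_cf_matrix[OF pos m[unfolded xs_def]] .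
  moreover have "c (Suc n) = tpoly_to_fls (p * y + p') / tpoly_to_fls (q * y + q')"
    unfolding c_def by (rule convergents_sword_cf_matrix[OF pos]) (simp only: xs' m')
  ultimately have "c (Suc n) - c n = inverse (tpoly_to_fls (q * y + q') * tpoly_to_fls q)"
    using q q' by (simp add: field_simps del: tpoly_to_fls_add tpoly_to_fls_mult)
  moreover have "fls_subdegree (inverse (tpoly_to_fls (q * y + q') * tpoly_to_fls q))
      = int (degree (q * y + q')) + int (degree q)"
    using q q' by (simp add: fls_subdegree_tpoly_to_fls del: tpoly_to_fls_add tpoly_to_fls_mult)
  ultimately have "fls_subdegree (c (Suc n) - c n) = int (degree (q * y + q')) + int (degree q)"
    by (simp only:)
  then have "int n \<le> fls_subdegree (c (Suc n) - c n)"
    using q(2) by linarith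
  then show ?thesis
    using fls_vanishes_below_mono[OF fls_vanishes_below_subdegree] by blast
qed

lemma convergents_sword_converge:
  fixes eps :: "nat \<Rightarrow> bit poly"
  assumes "\<And>n. 0 < degree (eps n)"
  obtains L where "convergents (\<lambda>i. tpoly_to_fls (sword eps i)) \<longlonglongrightarrow> L"
    and "\<And>n. fls_vanishes_below (L - convergents (\<lambda>i. tpoly_to_fls (sword eps i)) n) (int n)"
proof -
  have "fls_vanishes_below (convergents (\<lambda>i. tpoly_to_fls (sword eps i)) (Suc n)
      - convergents (\<lambda>i. tpoly_to_fls (sword eps i)) n) (int n)" for n
    using convergents_sword_diff[OF assms] .
  then show ?thesis
    using fls_convergent_if_differences_vanish_below that by blast
qed

text \<open>The matrix of \<open>W\<^sub>n\<close> is symmetric, \<open>[[p, q], [q, r]]\<close> with \<open>p r + q\<^sup>2 = 1\<close>, and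
  squaring it around \<open>\<epsilon>\<^sub>n\<close> gives the recursion below for the first row.\<close>

fun W_continuants :: "(nat \<Rightarrow> 'a::comm_ring_1) \<Rightarrow> nat \<Rightarrow> 'a \<times> 'a" where
  "W_continuants e 0 = (1, 0)"
| "W_continuants e (Suc n) = (case W_continuants e n of (p, q) \<Rightarrow> (e n * p\<^sup>2, e n * p * q + 1))"

lemma cf_matrix_W:
  fixes e :: "nat \<Rightarrow> 'a::comm_ring_1"
  assumes "CHAR('a) = 2"
  shows "W_continuants e n = (p, q) \<Longrightarrow> \<exists>r. cf_matrix (W e n) = (p, q, q, r)"
proof (induction n arbitrary: p q)
  case (Suc n)
  obtain p0 q0 where pq0: "W_continuants e n = (p0, q0)"
    by (cases "W_continuants e n") auto
  then obtain r0 where m: "cf_matrix (W e n) = (p0, q0, q0, r0)"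
    using Suc.IH by blast
  have det: "p0 * r0 + q0 * q0 = 1"
    using cf_matrix_det_CHAR_2[OF assms m] .
  have "cf_matrix (W e (Suc n))
      = mat2_mult (p0, q0, q0, r0) (mat2_mult (e n, 1, 1, 0) (p0, q0, q0, r0))"
    by (simp add: cf_matrix_append m)
  also have "\<dots> = (e n * p0\<^sup>2 + 2 * (p0 * q0), e n * p0 * q0 + (p0 * r0 + q0 * q0),
      e n * p0 * q0 + (p0 * r0 + q0 * q0), e n * q0\<^sup>2 + 2 * (q0 * r0))"
    by (simp add: algebra_simps power2_eq_square)
  also have "\<dots> = (p, q, q, e n * q0\<^sup>2)"
    using Suc.prems pq0 det two_eq_zero_CHAR_2[OF assms] by simp
  finally show ?case by blast
qed simp

lemma W_continuants_degrees:
  fixes eps :: "nat \<Rightarrow> bit poly"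
  assumes pos: "\<And>n. 0 < degree (eps n)" and pq: "W_continuants eps N = (p, q)"
  shows "p \<noteq> 0" and "N \<le> degree p" and "0 < N \<Longrightarrow> q \<noteq> 0 \<and> degree q < degree p"
proof -
  obtain r where m: "cf_matrix (W eps N) = (p, q, q, r)"
    using cf_matrix_W[OF _ pq] by auto
  have W_pos: "\<forall>x\<in>set (W eps N). 0 < degree x"
    using pos by (auto dest!: subsetD[OF set_W])
  show "0 < N \<Longrightarrow> q \<noteq> 0 \<and> degree q < degree p"
    using cf_matrix_degrees[OF _ W_pos m] by (cases N) auto
  have "N \<le> degree p \<and> p \<noteq> 0"
  proof (cases N)
    case (Suc n)
    have "N < 2 ^ N" by (rule less_exp)
    then show ?thesis
      using cf_matrix_degrees[OF _ W_pos m] Suc by (auto simp: length_W)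
  qed (use pq in simp)
  then show "p \<noteq> 0" and "N \<le> degree p" by auto
qed

lemma convergents_sword_W:
  fixes eps :: "nat \<Rightarrow> bit poly"
  assumes pos: "\<And>n. 0 < degree (eps n)" and "0 < N" and pq: "W_continuants eps N = (p, q)"
  shows "convergents (\<lambda>i. tpoly_to_fls (sword eps i)) (2 ^ N - 2) = tpoly_to_fls p / tpoly_to_fls q"
proof -
  obtain r where m: "cf_matrix (W eps N) = (p, q, q, r)"
    using cf_matrix_W[OF _ pq] by auto
  have "Suc (2 ^ N - 2) = 2 ^ N - 1"
    using \<open>0 < N\<close> by (metis Suc_diff_Suc Suc_1 one_less_power lessI numeral_2_eq_2)
  then have "cf_matrix (map (sword eps) [0..<Suc (2 ^ N - 2)]) = (p, q, q, r)"
    using m by (simp only: map_sword_W)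
  then show ?thesis
    by (rule convergents_sword_cf_matrix[OF pos])
qed

section \<open>An additive octic in characteristic two\<close>

definition additive_octic :: "'a::comm_ring_1 \<Rightarrow> 'a \<Rightarrow> 'a \<Rightarrow> 'a \<Rightarrow> 'a" where
  "additive_octic B0 B1 B2 x = x ^ 8 + B2 * x ^ 4 + B1 * x\<^sup>2 + B0 * x"

lemma additive_octic_add:
  fixes x y :: "'a::comm_ring_1"
  assumes "CHAR('a) = 2"
  shows "additive_octic B0 B1 B2 (x + y) = additive_octic B0 B1 B2 x + additive_octic B0 B1 B2 y"
proof -
  have "(x + y) ^ 2 = x ^ 2 + y ^ 2"
    using power2_add_CHAR_2[OF assms] .
  moreover have "(x + y) ^ 4 = x ^ 4 + y ^ 4"
    using power_two_power_add_CHAR_2[OF assms, of x y 2] by simp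
  moreover have "(x + y) ^ 8 = x ^ 8 + y ^ 8"
    using power_two_power_add_CHAR_2[OF assms, of x y 3] by simp
  ultimately show ?thesis
    by (simp add: additive_octic_def algebra_simps)
qed

text \<open>With \<open>u\<^sub>n = 1/P\<^sub>n\<close> and \<open>x\<^sub>n = Q\<^sub>n/P\<^sub>n\<close>: by additivity the step \<open>n \<mapsto> n + 1\<close> adds
  \<open>additive_octic B0 B1 B2 u\<^sub>n\<^sub>+\<^sub>1\<close>, whose terms \<open>u\<^sub>n\<^sub>+\<^sub>1\<^sup>2, u\<^sub>n\<^sub>+\<^sub>1\<^sup>4, u\<^sub>n\<^sub>+\<^sub>1\<^sup>8\<close> are
  multiples of \<open>u\<^sub>n\<^sub>+\<^sub>2, u\<^sub>n\<^sub>+\<^sub>3, u\<^sub>n\<^sub>+\<^sub>4\<close>; the \<open>B0\<close> terms cancel in pairs.\<close>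

lemma additive_octic_residual:
  fixes e u x :: "nat \<Rightarrow> 'a::comm_ring_1" and A B0 B1 B2 :: 'a
  defines "c2 \<equiv> \<lambda>n. e (n + 2) ^ 4 * e n ^ 2 * e (n + 1) + B2 * e n ^ 2 * e (n + 1)"
    and "c3 \<equiv> \<lambda>n. e n ^ 4 * e (n + 1) ^ 2 * e (n + 2)"
  assumes char: "CHAR('a) = 2"
    and per: "\<And>n. e (n + 3) = e n"
    and u: "\<And>n. u n ^ 2 = e n * u (Suc n)"
    and x: "\<And>n. x (Suc n) = x n + u (Suc n)"
    and B0: "\<And>n. c2 n + B1 * e (n + 1) = B0"
    and init: "additive_octic B0 B1 B2 (x 0) + A
      = B0 * u 1 + (e 2 ^ 4 * e 0 ^ 2 * e 1 + B2 * e 0 ^ 2 * e 1) * u 2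
        + e 0 ^ 4 * e 1 ^ 2 * e 2 * u 3"
  shows "additive_octic B0 B1 B2 (x n) + A = B0 * u (n + 1) + c2 n * u (n + 2) + c3 n * u (n + 3)"
proof (induction n)
  case (Suc n)
  define v where "v = u (n + 1)"
  have v2: "v ^ 2 = e (n + 1) * u (n + 2)"
    using u[of "n + 1"] by (simp add: v_def)
  have "v ^ 4 = (e (n + 1) * u (n + 2)) ^ 2"
    unfolding v2[symmetric] by (simp flip: power_mult)
  also have "\<dots> = e (n + 1) ^ 2 * e (n + 2) * u (n + 3)"
    using u[of "n + 2"] by (simp add: power_mult_distrib numeral_3_eq_3)
  finally have v4: "v ^ 4 = e (n + 1) ^ 2 * e (n + 2) * u (n + 3)" .
  have "v ^ 8 = (e (n + 1) ^ 2 * e (n + 2) * u (n + 3)) ^ 2"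
    unfolding v4[symmetric] by (simp flip: power_mult)
  also have "\<dots> = (e (n + 1) ^ 2 * e (n + 2)) ^ 2 * u (n + 3) ^ 2"
    by (rule power_mult_distrib)
  also have "\<dots> = e (n + 1) ^ 4 * e (n + 2) ^ 2 * e n * u (Suc n + 3)"
    using u[of "n + 3"] per[of n]
    by (simp add: power_mult_distrib mult_ac add.commute flip: power_mult)
  finally have v8: "v ^ 8 = e (n + 1) ^ 4 * e (n + 2) ^ 2 * e n * u (Suc n + 3)" .
  have "additive_octic B0 B1 B2 (x (Suc n)) + A
      = (additive_octic B0 B1 B2 (x n) + A) + additive_octic B0 B1 B2 v"
    using x[of n] additive_octic_add[OF char] by (simp add: v_def algebra_simps)
  also have "\<dots> = (c2 n + B1 * e (n + 1)) * u (n + 2)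
      + (c3 n + B2 * e (n + 1) ^ 2 * e (n + 2)) * u (n + 3)
      + e (n + 1) ^ 4 * e (n + 2) ^ 2 * e n * u (Suc n + 3) + (B0 * v + B0 * v)"
    unfolding Suc.IH unfolding additive_octic_def v2 v4 v8 by (simp add: v_def algebra_simps)
  also have "\<dots> = B0 * u (Suc n + 1) + c2 (Suc n) * u (Suc n + 2) + c3 (Suc n) * u (Suc n + 3)"
    using B0[of n] per[of n] add_self_CHAR_2[OF char]
    by (simp add: c2_def c3_def numeral_3_eq_3 algebra_simps)
  finally show ?case .
qed (use init in \<open>simp add: c2_def c3_def numeral_2_eq_2\<close>)

lemma additive_octic_vanishes_below:
  fixes d B0 B1 B2 :: "'a::comm_ring_1 fls"
  assumes d: "fls_vanishes_below d n" and "0 \<le> n" and "0 \<le> K"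
    and B: "fls_vanishes_below B0 (-K)" "fls_vanishes_below B1 (-K)" "fls_vanishes_below B2 (-K)"
  shows "fls_vanishes_below (additive_octic B0 B1 B2 d) (n - K)"
proof -
  have power: "fls_vanishes_below (d ^ j) n" if "0 < j" for j
  proof -
    have "n \<le> int j * n"
      using that \<open>0 \<le> n\<close> by (simp add: mult_le_cancel_right1)
    with fls_vanishes_below_power[OF d, of j] show ?thesis
      by (rule fls_vanishes_below_mono)
  qed
  have scaled: "fls_vanishes_below (B * d ^ j) (n - K)"
    if "fls_vanishes_below B (-K)" "0 < j" for B j
    using fls_vanishes_below_mult[OF that(1) power[OF that(2)]] by simp
  have "fls_vanishes_below (d ^ 8) (n - K)"
    using power[of 8] \<open>0 \<le> K\<close> by (auto intro: fls_vanishes_below_mono)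
  moreover have "fls_vanishes_below (B0 * d) (n - K)"
    using scaled[OF B(1), of 1] by simp
  ultimately show ?thesis
    unfolding additive_octic_def using scaled[OF B(2), of 2] scaled[OF B(3), of 4]
    by (intro fls_vanishes_below_add) auto
qed

lemma root_if_residuals_vanish_below:
  fixes \<beta> A B0 B1 B2 :: "'a::comm_ring_1 fls" and x :: "nat \<Rightarrow> 'a fls"
  assumes char: "CHAR('a) = 2" and "0 \<le> K"
    and approx: "\<And>N. M \<le> N \<Longrightarrow> fls_vanishes_below (\<beta> - x N) (int N - K)"
    and residual: "\<And>N. M \<le> N \<Longrightarrow> fls_vanishes_below (additive_octic B0 B1 B2 (x N) + A) (int N - K)"
    and B: "fls_vanishes_below B0 (-K)" "fls_vanishes_below B1 (-K)" "fls_vanishes_below B2 (-K)"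
  shows "\<beta> ^ 8 = A + B0 * \<beta> + B1 * \<beta>\<^sup>2 + B2 * \<beta> ^ 4"
proof -
  have char': "CHAR('a fls) = 2"
    using char by simp
  have "additive_octic B0 B1 B2 \<beta> + A = 0"
  proof (rule fls_eq_0_if_vanishes_below)
    fix k
    define N where "N = M + nat K + nat (k + 2 * K)"
    have N: "M \<le> N" "0 \<le> int N - K" "k \<le> int N - K - K"
      using \<open>0 \<le> K\<close> by (auto simp: N_def)
    have "additive_octic B0 B1 B2 \<beta>
        = additive_octic B0 B1 B2 (x N) + additive_octic B0 B1 B2 (\<beta> - x N)"
      using additive_octic_add[OF char', of B0 B1 B2 "x N" "\<beta> - x N"]
      by (metis add.commute diff_add_cancel)
    then have "additive_octic B0 B1 B2 \<beta> + A
        = (additive_octic B0 B1 B2 (x N) + A) + additive_octic B0 B1 B2 (\<beta> - x N)"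
      by (simp only: ac_simps)
    moreover have "fls_vanishes_below (additive_octic B0 B1 B2 (x N) + A) (int N - K - K)"
      using residual[OF N(1)] by (rule fls_vanishes_below_mono) (use \<open>0 \<le> K\<close> in simp)
    moreover have "fls_vanishes_below (additive_octic B0 B1 B2 (\<beta> - x N)) (int N - K - K)"
      using approx[OF N(1)] N(2) \<open>0 \<le> K\<close> B by (rule additive_octic_vanishes_below)
    ultimately have "fls_vanishes_below (additive_octic B0 B1 B2 \<beta> + A) (int N - K - K)"
      by (simp only: fls_vanishes_below_add)
    then show "fls_vanishes_below (additive_octic B0 B1 B2 \<beta> + A) k"
      using N(3) by (rule fls_vanishes_below_mono)
  qed
  then have "\<beta> ^ 8 + (A + B0 * \<beta> + B1 * \<beta>\<^sup>2 + B2 * \<beta> ^ 4) = 0"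
    by (simp add: additive_octic_def algebra_simps)
  then show ?thesis
    using eq_if_add_eq_0_CHAR_2[OF char'] by blast
qed

section \<open>The period-three sequence \<open>(a, b, c)\<^sup>\<infinity>\<close>\<close>

lemma W_continuants_fractions:
  fixes e :: "nat \<Rightarrow> 'a::field"
  assumes "\<And>n. e n \<noteq> 0"
  defines "u \<equiv> \<lambda>n. inverse (fst (W_continuants e n))"
    and "x \<equiv> \<lambda>n. snd (W_continuants e n) / fst (W_continuants e n)"
  shows "u n ^ 2 = e n * u (Suc n)" and "x (Suc n) = x n + u (Suc n)"
proof -
  have nz: "fst (W_continuants e n) \<noteq> 0" for n
    by (induction n) (auto simp: assms(1) split: prod.split)
  obtain p q where pq: "W_continuants e n = (p, q)"
    by (cases "W_continuants e n") auto
  have "p \<noteq> 0" "e n \<noteq> 0"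
    using nz[of n] assms(1) pq by auto
  then show "u n ^ 2 = e n * u (Suc n)" and "x (Suc n) = x n + u (Suc n)"
    using pq by (simp_all add: u_def x_def field_simps power2_eq_square)
qed

lemma fst_W_continuants_Suc:
  "fst (W_continuants e (Suc n)) = e n * fst (W_continuants e n) ^ 2"
  by (simp split: prod.split)

lemma tpoly_to_fls_W_continuants:
  "W_continuants (\<lambda>n. tpoly_to_fls (eps n)) n
    = map_prod tpoly_to_fls tpoly_to_fls (W_continuants eps n)"
  by (induction n) (auto split: prod.split)

definition octic_A :: "'a::comm_ring_1 \<Rightarrow> 'a \<Rightarrow> 'a \<Rightarrow> 'a" where
  "octic_A a b c = a^3*b^2*c + a^2*b^2*c^2 + a*b^3*c^2 + b^4*c^2 + a*b^2*c^3 + a*b*c^4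
    + a^2*b*c + a*b^2*c + a*b*c^2 + c^4 + 1"

definition octic_B0 :: "'a::comm_ring_1 \<Rightarrow> 'a \<Rightarrow> 'a \<Rightarrow> 'a" where
  "octic_B0 a b c = a^4*b^2*c + a^3*b^2*c^2 + a^2*b^3*c^2 + a*b^4*c^2 + a^2*b^2*c^3 + a^2*b*c^4"

definition octic_B1 :: "'a::comm_ring_1 \<Rightarrow> 'a \<Rightarrow> 'a \<Rightarrow> 'a" where
  "octic_B1 a b c = a^3*b^2*c + a^2*b^2*c^2 + a*b^3*c^2 + a^2*b*c^3"

definition octic_B2 :: "'a::comm_ring_1 \<Rightarrow> 'a \<Rightarrow> 'a \<Rightarrow> 'a" where
  "octic_B2 a b c = a^2*b*c + a*b^2*c + a*b*c^2"

lemma tpoly_to_fls_octic: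
  "tpoly_to_fls (octic_A a b c) = octic_A (tpoly_to_fls a) (tpoly_to_fls b) (tpoly_to_fls c)"
  "tpoly_to_fls (octic_B0 a b c) = octic_B0 (tpoly_to_fls a) (tpoly_to_fls b) (tpoly_to_fls c)"
  "tpoly_to_fls (octic_B1 a b c) = octic_B1 (tpoly_to_fls a) (tpoly_to_fls b) (tpoly_to_fls c)"
  "tpoly_to_fls (octic_B2 a b c) = octic_B2 (tpoly_to_fls a) (tpoly_to_fls b) (tpoly_to_fls c)"
  by (simp_all add: octic_A_def octic_B0_def octic_B1_def octic_B2_def)

lemma period3_coefficient_identity:
  fixes a b c :: "'a::idom" and e :: "nat \<Rightarrow> 'a"
  assumes char: "CHAR('a) = 2"
    and e: "\<And>n. e n = (if n mod 3 = 0 then a else if n mod 3 = 1 then b else c)"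
  shows "e (n + 2) ^ 4 * e n ^ 2 * e (n + 1) + octic_B2 a b c * e n ^ 2 * e (n + 1)
    + octic_B1 a b c * e (n + 1) = octic_B0 a b c"
proof -
  have abc: "c^4*a^2*b + octic_B2 a b c*a^2*b + octic_B1 a b c*b = octic_B0 a b c"
    by (rule eq_if_add_eq_double_CHAR_2[OF char, where z = "a*b^4*c^2 + a^2*b*c^4
      + a^2*b^2*c^3 + a^2*b^3*c^2 + a^3*b^2*c^2 + a^3*b^3*c + a^4*b^2*c"])
      (unfold octic_B0_def octic_B1_def octic_B2_def, algebra)
  have bca: "a^4*b^2*c + octic_B2 a b c*b^2*c + octic_B1 a b c*c = octic_B0 a b c"
    by (rule eq_if_add_eq_double_CHAR_2[OF char, where z = "a*b^3*c^3 + a*b^4*c^2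
      + a^2*b*c^4 + a^2*b^2*c^3 + a^2*b^3*c^2 + a^3*b^2*c^2 + a^4*b^2*c"])
      (unfold octic_B0_def octic_B1_def octic_B2_def, algebra)
  have cab: "b^4*c^2*a + octic_B2 a b c*c^2*a + octic_B1 a b c*a = octic_B0 a b c"
    by (rule eq_if_add_eq_double_CHAR_2[OF char, where z = "a*b^4*c^2 + a^2*b*c^4
      + a^2*b^2*c^3 + a^2*b^3*c^2 + a^3*b*c^3 + a^3*b^2*c^2 + a^4*b^2*c"])
      (unfold octic_B0_def octic_B1_def octic_B2_def, algebra)
  have "n mod 3 = 0 \<and> (n + 1) mod 3 = 1 \<and> (n + 2) mod 3 = 2
    \<or> n mod 3 = 1 \<and> (n + 1) mod 3 = 2 \<and> (n + 2) mod 3 = 0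
    \<or> n mod 3 = 2 \<and> (n + 1) mod 3 = 0 \<and> (n + 2) mod 3 = 1"
    by presburger
  then show ?thesis
    by (elim disjE conjE; simp add: e abc bca cab)
qed

lemma period3_residual:
  fixes a b c :: "'a::field" and e u x :: "nat \<Rightarrow> 'a"
  assumes char: "CHAR('a) = 2" and nz: "a \<noteq> 0" "b \<noteq> 0" "c \<noteq> 0"
    and e: "\<And>n. e n = (if n mod 3 = 0 then a else if n mod 3 = 1 then b else c)"
  defines "u \<equiv> \<lambda>n. inverse (fst (W_continuants e n))"
    and "x \<equiv> \<lambda>n. snd (W_continuants e n) / fst (W_continuants e n)"
  shows "additive_octic (octic_B0 a b c) (octic_B1 a b c) (octic_B2 a b c) (x n) + octic_A a b c
    = octic_B0 a b c * u (n + 1)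
    + (e (n + 2) ^ 4 * e n ^ 2 * e (n + 1) + octic_B2 a b c * e n ^ 2 * e (n + 1)) * u (n + 2)
    + e n ^ 4 * e (n + 1) ^ 2 * e (n + 2) * u (n + 3)"
proof -
  have e_nz: "\<And>n. e n \<noteq> 0"
    using nz by (simp add: e)
  have per: "e (n + 3) = e n" for n
    by (simp add: e)
  have u: "u n ^ 2 = e n * u (Suc n)" for n
    unfolding u_def using W_continuants_fractions(1)[of e, OF e_nz] .
  have x: "x (Suc n) = x n + u (Suc n)" for n
    unfolding u_def x_def using W_continuants_fractions(2)[of e, OF e_nz] .
  have P: "fst (W_continuants e 1) = a" "fst (W_continuants e 2) = b * a^2"
    "fst (W_continuants e 3) = c * (b * a^2)^2"
    using fst_W_continuants_Suc[of e 0] fst_W_continuants_Suc[of e 1, unfolded Suc_1]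
      fst_W_continuants_Suc[of e 2] by (simp_all add: e)
  have "octic_B0 a b c = a * (octic_A a b c - c^4 - octic_B2 a b c - 1)"
    unfolding octic_A_def octic_B0_def octic_B2_def by algebra
  then have "octic_B0 a b c * u 1 = octic_A a b c - c^4 - octic_B2 a b c - 1"
    using nz P by (simp add: u_def)
  moreover have "(e 2 ^ 4 * e 0 ^ 2 * e 1 + octic_B2 a b c * e 0 ^ 2 * e 1) * u 2
      = c^4 + octic_B2 a b c"
    using nz P by (simp add: u_def e field_simps)
  moreover have "e 0 ^ 4 * e 1 ^ 2 * e 2 * u 3 = 1"
    using nz P by (simp add: u_def e field_simps)
  moreover have "x 0 = 0"
    by (simp add: x_def)
  ultimately have "additive_octic (octic_B0 a b c) (octic_B1 a b c) (octic_B2 a b c) (x 0)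
      + octic_A a b c = octic_B0 a b c * u 1
      + (e 2 ^ 4 * e 0 ^ 2 * e 1 + octic_B2 a b c * e 0 ^ 2 * e 1) * u 2
      + e 0 ^ 4 * e 1 ^ 2 * e 2 * u 3"
    by (simp add: additive_octic_def)
  then show ?thesis
    using additive_octic_residual[OF char per u x period3_coefficient_identity[OF char e]] by blast
qed

text \<open>\<open>Q\<^sub>N/P\<^sub>N\<close> is the reciprocal of the convergent of index \<open>|W\<^sub>N| - 1 = 2\<^sup>N - 2\<close>.\<close>

lemma inverse_CF_sword_approx:
  fixes eps :: "nat \<Rightarrow> bit poly"
  assumes pos: "\<And>n. 0 < degree (eps n)"
    and close: "\<And>n. fls_vanishes_below (L - convergents (\<lambda>i. tpoly_to_fls (sword eps i)) n) (int n)"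
    and "0 < N"
  shows "fls_vanishes_below (inverse L - tpoly_to_fls (snd (W_continuants eps N))
    / tpoly_to_fls (fst (W_continuants eps N))) (int N - 1)"
proof -
  obtain p q where pq: "W_continuants eps N = (p, q)"
    by (cases "W_continuants eps N") auto
  define z where "z = tpoly_to_fls p / tpoly_to_fls q"
  have "p \<noteq> 0" "q \<noteq> 0" "degree q < degree p"
    using W_continuants_degrees[OF pos pq] \<open>0 < N\<close> by auto
  then have z: "z \<noteq> 0" "fls_subdegree z < 0"
    by (simp_all add: z_def fls_subdegree_tpoly_to_fls fls_divide_subdegree)
  have "fls_vanishes_below (L - z) (int (2 ^ N - 2))"
    using close[of "2 ^ N - 2"] convergents_sword_W[OF pos \<open>0 < N\<close> pq] by (simp add: z_def)
  then have "fls_vanishes_below (inverse L - inverse z) (int (2 ^ N - 2) - 2 * fls_subdegree z)"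
    using z by (intro fls_vanishes_below_inverse_diff) auto
  moreover have "int N - 1 \<le> int (2 ^ N - 2) - 2 * fls_subdegree z"
    using less_exp[of N] z(2) by linarith
  ultimately show ?thesis
    by (simp add: z_def pq fls_vanishes_below_mono)
qed

lemma period3_residual_vanishes_below:
  fixes e u :: "nat \<Rightarrow> 'a::comm_ring_1 fls"
  assumes e: "\<And>n. fls_vanishes_below (e n) (-D)" and u: "\<And>n. fls_vanishes_below (u n) (int n)"
    and B: "fls_vanishes_below B0 (-K)" "fls_vanishes_below B2 (-K)" and "0 \<le> D" "0 \<le> K"
  shows "fls_vanishes_below (B0 * u (n + 1)
    + (e (n + 2) ^ 4 * e n ^ 2 * e (n + 1) + B2 * e n ^ 2 * e (n + 1)) * u (n + 2)
    + e n ^ 4 * e (n + 1) ^ 2 * e (n + 2) * u (n + 3)) (int n - (K + 7 * D))"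
proof -
  have ek: "fls_vanishes_below (e i ^ k) (- int k * D)" for i k
    using fls_vanishes_below_power[OF e[of i], of k] by simp
  have e3: "fls_vanishes_below (e i ^ k * e j ^ l * e m) (- (int k + int l + 1) * D)" for i j m k l
    using fls_vanishes_below_mult[OF fls_vanishes_below_mult[OF ek[of i k] ek[of j l]] e[of m]]
    by (simp add: algebra_simps)
  have "fls_vanishes_below (B2 * e n ^ 2 * e (n + 1)) (- K - 3 * D)"
    using fls_vanishes_below_mult[OF fls_vanishes_below_mult[OF B(2) ek[of n 2]] e[of "n + 1"]]
    by (simp add: algebra_simps)
  moreover have "fls_vanishes_below (e (n + 2) ^ 4 * e n ^ 2 * e (n + 1)) (- K - 7 * D)"
    using e3[of "n + 2" 4 n 2 "n + 1"] by (rule fls_vanishes_below_mono) (use assms(5,6) in simp)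
  ultimately have "fls_vanishes_below
      (e (n + 2) ^ 4 * e n ^ 2 * e (n + 1) + B2 * e n ^ 2 * e (n + 1))
      (- K - 7 * D)"
    using assms(5) by (intro fls_vanishes_below_add) (auto elim: fls_vanishes_below_mono)
  then have "fls_vanishes_below ((e (n + 2) ^ 4 * e n ^ 2 * e (n + 1) + B2 * e n ^ 2 * e (n + 1))
      * u (n + 2)) (int n - (K + 7 * D))"
    using fls_vanishes_below_mult[OF _ u[of "n + 2"]] fls_vanishes_below_mono by fastforce
  moreover have "fls_vanishes_below (e n ^ 4 * e (n + 1) ^ 2 * e (n + 2) * u (n + 3))
      (int n - (K + 7 * D))"
    using fls_vanishes_below_mult[OF e3[of n 4 "n + 1" 2 "n + 2"] u[of "n + 3"]]
    by (rule fls_vanishes_below_mono) (use assms(6) in simp)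
  moreover have "fls_vanishes_below (B0 * u (n + 1)) (int n - (K + 7 * D))"
    using fls_vanishes_below_mult[OF B(1) u[of "n + 1"]]
    by (rule fls_vanishes_below_mono) (use assms(5) in simp)
  ultimately show ?thesis
    by (intro fls_vanishes_below_add)
qed

lemma period3_residual_small:
  fixes a b c :: "bit poly"
  assumes "degree a > 0" and "degree b > 0" and "degree c > 0"
  defines "eps \<equiv> (\<lambda>n::nat. if n mod 3 = 0 then a else if n mod 3 = 1 then b else c)"
  obtains K where "0 \<le> K"
    and "\<And>n. fls_vanishes_below (additive_octic (tpoly_to_fls (octic_B0 a b c))
      (tpoly_to_fls (octic_B1 a b c)) (tpoly_to_fls (octic_B2 a b c))
      (tpoly_to_fls (snd (W_continuants eps n)) / tpoly_to_fls (fst (W_continuants eps n)))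
      + tpoly_to_fls (octic_A a b c)) (int n - K)"
    and "fls_vanishes_below (tpoly_to_fls (octic_B0 a b c)) (-K)"
      "fls_vanishes_below (tpoly_to_fls (octic_B1 a b c)) (-K)"
      "fls_vanishes_below (tpoly_to_fls (octic_B2 a b c)) (-K)"
proof -
  define e where "e n = tpoly_to_fls (eps n)" for n
  define u where "u n = inverse (fst (W_continuants e n))" for n
  have W_e: "W_continuants e n = map_prod tpoly_to_fls tpoly_to_fls (W_continuants eps n)" for n
    unfolding e_def by (rule tpoly_to_fls_W_continuants)
  have "tpoly_to_fls a \<noteq> 0" "tpoly_to_fls b \<noteq> 0" "tpoly_to_fls c \<noteq> 0"
    using assms(1-3) by auto
  from period3_residual[OF _ this, of e]
  have residual: "additive_octic (tpoly_to_fls (octic_B0 a b c)) (tpoly_to_fls (octic_B1 a b c))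
      (tpoly_to_fls (octic_B2 a b c))
      (tpoly_to_fls (snd (W_continuants eps n)) / tpoly_to_fls (fst (W_continuants eps n)))
      + tpoly_to_fls (octic_A a b c) = tpoly_to_fls (octic_B0 a b c) * u (n + 1)
      + (e (n + 2) ^ 4 * e n ^ 2 * e (n + 1) + tpoly_to_fls (octic_B2 a b c) * e n ^ 2 * e (n + 1))
        * u (n + 2)
      + e n ^ 4 * e (n + 1) ^ 2 * e (n + 2) * u (n + 3)" for n
    by (simp add: u_def W_e e_def eps_def tpoly_to_fls_octic)
  define D where "D = int (degree a + degree b + degree c)"
  define K where
    "K = int (degree (octic_B0 a b c) + degree (octic_B1 a b c) + degree (octic_B2 a b c))"
  have e_small: "fls_vanishes_below (e n) (-D)" for n
    using fls_vanishes_below_tpoly_to_fls[of "eps n"] unfolding e_def D_def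
    by (rule fls_vanishes_below_mono) (simp add: eps_def)
  have u_small: "fls_vanishes_below (u n) (int n)" for n
  proof -
    have "0 < degree (eps n)" for n
      using assms(1-3) by (simp add: eps_def)
    then have "fst (W_continuants eps n) \<noteq> 0" "n \<le> degree (fst (W_continuants eps n))"
      using W_continuants_degrees[of eps n _ "snd (W_continuants eps n)"] by auto
    then show ?thesis
      using fls_vanishes_below_subdegree[of "u n"]
      by (auto simp: u_def W_e fls_subdegree_tpoly_to_fls elim!: fls_vanishes_below_mono)
  qed
  have B: "fls_vanishes_below (tpoly_to_fls (octic_B0 a b c)) (-K)"
    "fls_vanishes_below (tpoly_to_fls (octic_B1 a b c)) (-K)"
    "fls_vanishes_below (tpoly_to_fls (octic_B2 a b c)) (-K)"
    using fls_vanishes_below_tpoly_to_fls[of "octic_B0 a b c"]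
      fls_vanishes_below_tpoly_to_fls[of "octic_B1 a b c"]
      fls_vanishes_below_tpoly_to_fls[of "octic_B2 a b c"]
    by (auto simp: K_def elim!: fls_vanishes_below_mono)
  show thesis
  proof (rule that[of "K + 7 * D"])
    show "fls_vanishes_below (additive_octic (tpoly_to_fls (octic_B0 a b c))
      (tpoly_to_fls (octic_B1 a b c)) (tpoly_to_fls (octic_B2 a b c))
      (tpoly_to_fls (snd (W_continuants eps n)) / tpoly_to_fls (fst (W_continuants eps n)))
      + tpoly_to_fls (octic_A a b c)) (int n - (K + 7 * D))" for n
      unfolding residual
      by (rule period3_residual_vanishes_below[OF e_small u_small B(1,3)])
        (simp_all add: D_def K_def)
  qed (use B in \<open>auto simp: D_def K_def elim!: fls_vanishes_below_mono\<close>)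
qed

theorem mainTheorem5:
  fixes a b c :: "bit poly"
  assumes "degree a > 0" and "degree b > 0" and "degree c > 0"
  defines "eps \<equiv> (\<lambda>n::nat. if n mod 3 = 0 then a else if n mod 3 = 1 then b else c)"
  defines "A \<equiv> a^3*b^2*c + a^2*b^2*c^2 + a*b^3*c^2 + b^4*c^2 + a*b^2*c^3 + a*b*c^4
                + a^2*b*c + a*b^2*c + a*b*c^2 + c^4 + 1"
  defines "B0 \<equiv> a^4*b^2*c + a^3*b^2*c^2 + a^2*b^3*c^2 + a*b^4*c^2 + a^2*b^2*c^3 + a^2*b*c^4"
  defines "B1 \<equiv> a^3*b^2*c + a^2*b^2*c^2 + a*b^3*c^2 + a^2*b*c^3"
  defines "B2 \<equiv> a^2*b*c + a*b^2*c + a*b*c^2"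
  defines "\<beta> \<equiv> 1 / CF (\<lambda>i. tpoly_to_fls (sword eps i))"
  shows "convergent (convergents (\<lambda>i. tpoly_to_fls (sword eps i))) \<and>
         \<beta>^8 = tpoly_to_fls A + tpoly_to_fls B0 * \<beta> + tpoly_to_fls B1 * \<beta>^2
                + tpoly_to_fls B2 * \<beta>^4"
proof -
  have pos: "\<And>n. 0 < degree (eps n)"
    using assms(1-3) by (simp add: eps_def)
  obtain L where lim: "convergents (\<lambda>i. tpoly_to_fls (sword eps i)) \<longlonglongrightarrow> L"
    and close: "\<And>n. fls_vanishes_below (L - convergents (\<lambda>i. tpoly_to_fls (sword eps i)) n) (int n)"
    using convergents_sword_converge[where eps = eps, OF pos] by blast
  have \<beta>: "\<beta> = inverse L"
    using lim by (simp add: \<beta>_def CF_def limI inverse_eq_divide)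
  have octic: "A = octic_A a b c" "B0 = octic_B0 a b c" "B1 = octic_B1 a b c" "B2 = octic_B2 a b c"
    by (simp_all add: A_def B0_def B1_def B2_def octic_A_def octic_B0_def octic_B1_def octic_B2_def)
  obtain K where "0 \<le> K" and residual: "\<And>n. fls_vanishes_below (additive_octic (tpoly_to_fls B0)
      (tpoly_to_fls B1) (tpoly_to_fls B2) (tpoly_to_fls (snd (W_continuants eps n))
      / tpoly_to_fls (fst (W_continuants eps n))) + tpoly_to_fls A) (int n - K)"
    and B: "fls_vanishes_below (tpoly_to_fls B0) (-K)" "fls_vanishes_below (tpoly_to_fls B1) (-K)"
      "fls_vanishes_below (tpoly_to_fls B2) (-K)"
    using period3_residual_small[OF assms(1-3), folded eps_def octic] by blast
  have "fls_vanishes_below (\<beta> - tpoly_to_fls (snd (W_continuants eps N))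
      / tpoly_to_fls (fst (W_continuants eps N))) (int N - (K + 1))" if "1 \<le> N" for N
    using inverse_CF_sword_approx[where eps = eps, OF pos close, of N] that \<open>0 \<le> K\<close>
    by (auto simp: \<beta> elim!: fls_vanishes_below_mono)
  moreover have "fls_vanishes_below (tpoly_to_fls B) (- (K + 1))"
    if "fls_vanishes_below (tpoly_to_fls B) (- K)" for B
    using that by (rule fls_vanishes_below_mono) simp
  ultimately have "\<beta> ^ 8 = tpoly_to_fls A + tpoly_to_fls B0 * \<beta> + tpoly_to_fls B1 * \<beta>\<^sup>2
      + tpoly_to_fls B2 * \<beta> ^ 4"
    using residual B \<open>0 \<le> K\<close> fls_vanishes_below_mono[OF residual]
    by (intro root_if_residuals_vanish_below[where M = 1 and K = "K + 1"]) auto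
  then show ?thesis
    using lim convergentI by blast
qed

end
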